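(* Let $\preceq_1,\preceq_2,\preceq_3$ be E-relations on $L$ and suppose $\preceq_2$ is not absurd. Then $(\preceq_1*\preceq_2)*\preceq_3=\preceq_1*(\preceq_2*\preceq_3)$.
   Context: $L$ is a propositional language built from a finite set of propositional variables with the connectives $\neg,\wedge,\vee,\rightarrow,\top,\bot$; $W$ is the finite set of propositional worlds. For $\theta\in L$, $S_\theta=\{w\in W\mid w\models\theta\}$; $E\models\phi$ means $\bigcap_{\theta\in E}S_\theta\subseteq S_\phi$, and $\models\phi$ means $\emptyset\models\phi$. E-relation: a relation $\preceq\subseteq L\times L$ such that for all $\theta,\phi,\psi$: (E1) $\theta\preceq\phi$ and $\phi\preceq\psi$ imply $\theta\preceq\psi$; (E2) $\theta\models\phi$ implies $\theta\preceq\phi$; (E3) $\theta\preceq\theta\wedge\phi$ or $\phi\preceq\theta\wedge\phi$; (E4) if $\bot\prec\psi$ for some $\psi$, then $\theta\preceq\phi$ for all $\theta$ implies $\models\phi$. Here $\theta\prec\phi$ iff $\theta\preceq\phi$ and not $\phi\preceq\theta$. An E-relation is absurd iff $\theta\preceq\phi$ for all $\theta,\phi\in L$. Sequences: finite sequences $\vec{\mathcal U}=(\mathcal U_0,\ldots,\mathcal U_k)$ of mutually disjoint subsets of $W$ (components may be empty, possibly repeatedly). $\mathrm{rank}^{\vec{\mathcal U}}(\theta)$ is the least $i$ with $\mathcal U_i\cap S_\theta\neq\emptyset$, $\infty$ if none ($i<\infty$ for all integers $i$). $\theta\mid\!\sim_{\vec{\mathcal U}}\phi$ iff $\mathrm{rank}^{\vec{\mathcal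 U}}(\theta)<\mathrm{rank}^{\vec{\mathcal U}}(\theta\wedge\neg\phi)$ or $\mathrm{rank}^{\vec{\mathcal U}}(\theta)=\infty$. $\vec{\mathcal U}$ is full iff $\bigcup_i\mathcal U_i=W$, empty iff $\bigcup_i\mathcal U_i=\emptyset$; $\Upsilon$ is the set of sequences which are full or empty. For $\vec{\mathcal U}\in\Upsilon$, $\theta\preceq_{\vec{\mathcal U}}\phi$ iff (not $\neg\theta\vee\neg\phi\mid\!\sim_{\vec{\mathcal U}}\theta$) or $\neg\phi\mid\!\sim_{\vec{\mathcal U}}\bot$. Sequence revision: for $\vec{\mathcal U}=(\mathcal U_0,\ldots,\mathcal U_k)$, $\vec{\mathcal V}=(\mathcal V_0,\ldots,\mathcal V_m)$ in $\Upsilon$, if $\vec{\mathcal U}$ is full then $\vec{\mathcal U}*\vec{\mathcal V}=(\mathcal U_0\cap\mathcal V_0,\ldots,\mathcal U_k\cap\mathcal V_0,\ \ldots,\ \mathcal U_0\cap\mathcal V_m,\ldots,\mathcal U_k\cap\mathcal V_m)$; otherwise $\vec{\mathcal U}*\vec{\mathcal V}=\vec{\mathcal V}$. Revision of E-relations: every E-relation equals $\preceq_{\vec{\mathcal U}}$ for some $\vec{\mathcal U}\in\Upsilon$, and for E-relations $\preceq_K,\preceq_E$ one defines $\preceq_K*\preceq_E=\preceq_{\vec{\mathcal U}*\vec{\mathcal V}}$, where $\vec{\mathcal U},\vec{\mathcal V}\in\Upsilon$ are any sequences with $\preceq_K=\preceq_{\vec{\mathcal U}}$ and $\preceq_E=\preceq_{\vec{\mathcal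 V}}$ (the result is independent of this choice and is again an E-relation). *)

theory Defs
  imports Main "HOL-Library.Extended_Nat"
begin

datatype 'v form =
    Var 'v
  | Neg "'v form"
  | Conj "'v form" "'v form"
  | Disj "'v form" "'v form"
  | Imp "'v form" "'v form"
  | Top
  | Bot

(* worlds = valuations, represented as the set of true variables *)
fun sat :: "'v set \<Rightarrow> 'v form \<Rightarrow> bool" where
  "sat w (Var p) = (p \<in> w)"
| "sat w (Neg a) = (\<not> sat w a)"
| "sat w (Conj a b) = (sat w a \<and> sat w b)"
| "sat w (Disj a b) = (sat w a \<or> sat w b)"
| "sat w (Imp a b) = (sat w a \<longrightarrow> sat w b)"
| "sat w Top = True"
| "sat w Bot = False"

definition S :: "'v form \<Rightarrow> 'v set set" where
  "S \<theta> = {w. sat w \<theta>}"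

definition entails :: "'v form \<Rightarrow> 'v form \<Rightarrow> bool" where
  "entails \<theta> \<phi> \<longleftrightarrow> S \<theta> \<subseteq> S \<phi>"

definition valid :: "'v form \<Rightarrow> bool" where
  "valid \<phi> \<longleftrightarrow> S \<phi> = UNIV"

definition strict :: "('v form \<Rightarrow> 'v form \<Rightarrow> bool) \<Rightarrow> 'v form \<Rightarrow> 'v form \<Rightarrow> bool" where
  "strict r \<theta> \<phi> \<longleftrightarrow> r \<theta> \<phi> \<and> \<not> r \<phi> \<theta>"

definition E_relation :: "('v form \<Rightarrow> 'v form \<Rightarrow> bool) \<Rightarrow> bool" where
  "E_relation r \<longleftrightarrow>
     (\<forall>\<theta> \<phi> \<psi>. r \<theta> \<phi> \<longrightarrow> r \<phi> \<psi> \<longrightarrow> r \<theta> \<psi>) \<and>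
     (\<forall>\<theta> \<phi>. entails \<theta> \<phi> \<longrightarrow> r \<theta> \<phi>) \<and>
     (\<forall>\<theta> \<phi>. r \<theta> (Conj \<theta> \<phi>) \<or> r \<phi> (Conj \<theta> \<phi>)) \<and>
     ((\<exists>\<psi>. strict r Bot \<psi>) \<longrightarrow> (\<forall>\<phi>. (\<forall>\<theta>. r \<theta> \<phi>) \<longrightarrow> valid \<phi>))"

definition absurd :: "('v form \<Rightarrow> 'v form \<Rightarrow> bool) \<Rightarrow> bool" where
  "absurd r \<longleftrightarrow> (\<forall>\<theta> \<phi>. r \<theta> \<phi>)"

definition is_seq :: "'v set set list \<Rightarrow> bool" where
  "is_seq U \<longleftrightarrow> U \<noteq> [] \<and>
     (\<forall>i<length U. \<forall>j<length U. i \<noteq> j \<longrightarrow> U ! i \<inter> U ! j = {})"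

definition rank :: "'v set set list \<Rightarrow> 'v form \<Rightarrow> enat" where
  "rank U \<theta> = (if \<exists>i<length U. U ! i \<inter> S \<theta> \<noteq> {}
                then enat (LEAST i. i < length U \<and> U ! i \<inter> S \<theta> \<noteq> {})
                else \<infinity>)"

definition nm :: "'v set set list \<Rightarrow> 'v form \<Rightarrow> 'v form \<Rightarrow> bool" where
  "nm U \<theta> \<phi> \<longleftrightarrow> rank U \<theta> < rank U (Conj \<theta> (Neg \<phi>)) \<or> rank U \<theta> = \<infinity>"

definition full :: "'v set set list \<Rightarrow> bool" where
  "full U \<longleftrightarrow> \<Union>(set U) = UNIV"

definition empty_seq :: "'v set set list \<Rightarrow> bool" where
  "empty_seq U \<longleftrightarrow> \<Union>(set U) = {}"

definition Ups :: "'v set set list set" where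
  "Ups = {U. is_seq U \<and> (full U \<or> empty_seq U)}"

definition prec :: "'v set set list \<Rightarrow> 'v form \<Rightarrow> 'v form \<Rightarrow> bool" where
  "prec U \<theta> \<phi> \<longleftrightarrow> \<not> nm U (Disj (Neg \<theta>) (Neg \<phi>)) \<theta> \<or> nm U (Neg \<phi>) Bot"

(* (U_0 \<inter> V_0, ..., U_k \<inter> V_0, ..., U_0 \<inter> V_m, ..., U_k \<inter> V_m) *)
definition seq_rev :: "'v set set list \<Rightarrow> 'v set set list \<Rightarrow> 'v set set list" where
  "seq_rev U V = (if full U then concat (map (\<lambda>v. map (\<lambda>u. u \<inter> v) U) V) else V)"

(* revision of E-relations via (arbitrarily chosen) representing sequences in Upsilon *)
definition rep :: "('v form \<Rightarrow> 'v form \<Rightarrow> bool) \<Rightarrow> 'v set set list" where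
  "rep r = (SOME U. U \<in> Ups \<and> prec U = r)"

definition erev :: "('v form \<Rightarrow> 'v form \<Rightarrow> bool) \<Rightarrow> ('v form \<Rightarrow> 'v form \<Rightarrow> bool)
                     \<Rightarrow> ('v form \<Rightarrow> 'v form \<Rightarrow> bool)" where
  "erev r1 r2 = prec (seq_rev (rep r1) (rep r2))"

end

theory Submission
  imports Defs
begin

text \<open>
An E-relation is determined by how it compares the formulas except w, which fail at exactly one
world w: a sequence in \<Upsilon> represents it precisely when its world ranks induce the same total
preorder on worlds and leave the same worlds unranked. Revision by a full sequence U ranks worlds
lexicographically, rank (U * V) w = |U| rank V w + rank U w, so revision respects this
equivalence and is well defined on E-relations. A non-absurd E-relation is represented only by
full sequences, and for full V both (U * V) * W and U * (V * W) are the list of all intersections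
U_i \<inter> V_j \<inter> W_k in the same order.
\<close>

section \<open>Ranks of worlds\<close>

lemma S_simps [simp]:
  "S (Var p) = {w. p \<in> w}" "S (Neg a) = - S a" "S (Conj a b) = S a \<inter> S b"
  "S (Disj a b) = S a \<union> S b" "S (Imp a b) = - S a \<union> S b" "S Top = UNIV" "S Bot = {}"
  by (auto simp: S_def)

lemma INF_enat_attained:
  fixes f :: "'a \<Rightarrow> enat"
  assumes "(INF x\<in>A. f x) \<noteq> \<infinity>"
  obtains x where "x \<in> A" "f x = (INF x\<in>A. f x)"
proof -
  have "f ` A \<noteq> {}" using assms by (auto simp: top_enat_def[symmetric])
  then have "Inf (f ` A) \<in> f ` A" unfolding Inf_enat_def by (auto intro: LeastI)
  then show ?thesis using that by (metis imageE)
qed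

lemma INF_enat_le_INF_iff:
  fixes f :: "'a \<Rightarrow> enat"
  shows "(INF x\<in>A. f x) \<le> (INF y\<in>B. f y) \<longleftrightarrow>
    (\<forall>y\<in>B. f y \<noteq> \<infinity> \<longrightarrow> (\<exists>x\<in>A. f x \<le> f y))"
proof
  assume le: "(INF x\<in>A. f x) \<le> (INF y\<in>B. f y)"
  show "\<forall>y\<in>B. f y \<noteq> \<infinity> \<longrightarrow> (\<exists>x\<in>A. f x \<le> f y)"
  proof (intro ballI impI)
    fix y assume "y \<in> B" "f y \<noteq> \<infinity>"
    then have "(INF x\<in>A. f x) \<le> f y" using le INF_lower order_trans by metis
    with \<open>f y \<noteq> \<infinity>\<close> have "(INF x\<in>A. f x) \<noteq> \<infinity>" by (metis infinity_ileE enat.exhaust)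
    then obtain x where "x \<in> A" "f x = (INF x\<in>A. f x)" by (rule INF_enat_attained)
    with \<open>(INF x\<in>A. f x) \<le> f y\<close> show "\<exists>x\<in>A. f x \<le> f y" by metis
  qed
next
  assume H: "\<forall>y\<in>B. f y \<noteq> \<infinity> \<longrightarrow> (\<exists>x\<in>A. f x \<le> f y)"
  show "(INF x\<in>A. f x) \<le> (INF y\<in>B. f y)"
  proof (cases "(INF y\<in>B. f y) = \<infinity>")
    case False
    then obtain y where "y \<in> B" "f y = (INF y\<in>B. f y)" by (rule INF_enat_attained)
    with H False obtain x where "x \<in> A" "f x \<le> f y" by auto
    then show ?thesis using \<open>f y = _\<close> INF_lower order_trans by metis
  qed simp
qed

lemma INF_enat_eq_Least: "(INF i\<in>Collect P. enat i) = (if \<exists>i. P i then enat (Least P) else \<infinity>)"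
proof (cases "\<exists>i. P i")
  case True
  have "(INF i\<in>Collect P. enat i) \<le> enat (Least P)" using True by (intro INF_lower) (simp add: LeastI_ex)
  moreover have "enat (Least P) \<le> (INF i\<in>Collect P. enat i)" by (intro INF_greatest) (simp add: Least_le)
  ultimately show ?thesis using True by simp
qed (simp add: Inf_enat_def)

definition world_rank :: "'a set list \<Rightarrow> 'a \<Rightarrow> enat" where
  "world_rank U w = (INF i\<in>{i. i < length U \<and> w \<in> U ! i}. enat i)"

lemma rank_eq_INF_world_rank: "rank U \<theta> = (INF w\<in>S \<theta>. world_rank U w)"
proof -
  have "rank U \<theta> = (INF i\<in>{i. i < length U \<and> U ! i \<inter> S \<theta> \<noteq> {}}. enat i)"
    by (simp add: rank_def INF_enat_eq_Least)
  also have "\<dots> = (INF w\<in>S \<theta>. world_rank U w)"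
    unfolding world_rank_def
    by (rule antisym; intro INF_greatest) (auto intro: INF_lower2)
  finally show ?thesis .
qed

lemma world_rank_eq_infinity_iff: "world_rank U w = \<infinity> \<longleftrightarrow> w \<notin> \<Union>(set U)"
  unfolding world_rank_def top_enat_def[symmetric] INF_top_conv
  by (fastforce simp: top_enat_def in_set_conv_nth)

lemma world_rank_less_length:
  assumes "w \<in> \<Union>(set U)"
  shows "world_rank U w < enat (length U)"
proof -
  obtain i where "i < length U" "w \<in> U ! i" using assms by (auto simp: in_set_conv_nth)
  then have "world_rank U w \<le> enat i" unfolding world_rank_def by (intro INF_lower) simp
  with \<open>i < length U\<close> show ?thesis by (simp add: order_le_less_trans)
qed

lemma world_rank_nth:
  assumes "is_seq U" "i < length U" "w \<in> U ! i"
  shows "world_rank U w = enat i"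
proof -
  have "{i. i < length U \<and> w \<in> U ! i} = {i}"
    using assms by (auto simp: is_seq_def)
  then show ?thesis by (simp add: world_rank_def)
qed

lemma full_iff_world_rank: "full U \<longleftrightarrow> (\<forall>w. world_rank U w \<noteq> \<infinity>)"
  by (auto simp: full_def world_rank_eq_infinity_iff)

lemma empty_seq_iff_world_rank: "empty_seq U \<longleftrightarrow> (\<forall>w. world_rank U w = \<infinity>)"
  by (auto simp: empty_seq_def world_rank_eq_infinity_iff)

lemma rank_Disj: "rank U (Disj a b) = min (rank U a) (rank U b)"
  by (simp add: rank_eq_INF_world_rank INF_union inf_enat_def)

lemma prec_iff_rank_le: "prec U \<theta> \<phi> \<longleftrightarrow> rank U (Neg \<theta>) \<le> rank U (Neg \<phi>)"
proof -
  have "rank U (Conj (Disj (Neg \<theta>) (Neg \<phi>)) (Neg \<theta>)) = rank U (Neg \<theta>)"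
    and "rank U (Conj (Neg \<phi>) (Neg Bot)) = rank U (Neg \<phi>)"
    by (simp_all add: rank_eq_INF_world_rank Int_absorb1)
  then show ?thesis
    unfolding prec_def nm_def rank_Disj
    by (cases "rank U (Neg \<theta>)"; cases "rank U (Neg \<phi>)") (auto simp: min_def)
qed

lemma prec_iff_world_rank:
  "prec U \<theta> \<phi> \<longleftrightarrow>
     (\<forall>w. w \<notin> S \<phi> \<longrightarrow> world_rank U w \<noteq> \<infinity> \<longrightarrow>
       (\<exists>w'. w' \<notin> S \<theta> \<and> world_rank U w' \<le> world_rank U w))"
  by (simp add: prec_iff_rank_le rank_eq_INF_world_rank INF_enat_le_INF_iff Ball_def Bex_def)

lemma full_if_not_absurd:
  assumes "U \<in> Ups" "\<not> absurd (prec U)"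
  shows "full U"
proof (rule ccontr)
  assume "\<not> full U"
  with assms(1) have "\<forall>w. world_rank U w = \<infinity>" by (simp add: Ups_def empty_seq_iff_world_rank)
  then have "absurd (prec U)" by (simp add: absurd_def prec_iff_world_rank)
  with assms(2) show False ..
qed

section \<open>Revision of sequences\<close>

lemma seq_rev_full: "full U \<Longrightarrow> seq_rev U V = map (\<lambda>(v, u). u \<inter> v) (List.product V U)"
  by (simp add: seq_rev_def product_concat_map map_concat comp_def)

lemma length_seq_rev: "full U \<Longrightarrow> length (seq_rev U V) = length V * length U"
  by (simp add: seq_rev_full)

lemma nth_seq_rev:
  "full U \<Longrightarrow> k < length V * length U \<Longrightarrow>
     seq_rev U V ! k = U ! (k mod length U) \<inter> V ! (k div length U)"
  by (simp add: seq_rev_full product_nth)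

lemma is_seq_seq_rev:
  assumes "full U" "is_seq U" "is_seq V"
  shows "is_seq (seq_rev U V)"
proof -
  let ?n = "length U"
  have "k = k'"
    if k: "k < length V * ?n" "k' < length V * ?n"
      and w: "w \<in> seq_rev U V ! k" "w \<in> seq_rev U V ! k'" for k k' w
  proof -
    have "0 < ?n" using k by (cases ?n) auto
    then have "k mod ?n < ?n" "k' mod ?n < ?n" "k div ?n < length V" "k' div ?n < length V"
      using k by (simp_all add: less_mult_imp_div_less)
    moreover have "w \<in> U ! (k mod ?n) \<inter> U ! (k' mod ?n)" "w \<in> V ! (k div ?n) \<inter> V ! (k' div ?n)"
      using w by (simp_all add: nth_seq_rev[OF assms(1) k(1)] nth_seq_rev[OF assms(1) k(2)])
    ultimately have "k mod ?n = k' mod ?n" "k div ?n = k' div ?n"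
      using assms(2,3) unfolding is_seq_def by blast+
    then show "k = k'" by (metis div_mult_mod_eq)
  qed
  moreover have "seq_rev U V \<noteq> []"
  proof
    assume "seq_rev U V = []"
    then have "length V * ?n = 0" by (simp flip: length_seq_rev[OF assms(1)])
    with assms(2,3) show False by (simp add: is_seq_def)
  qed
  ultimately show ?thesis unfolding is_seq_def length_seq_rev[OF assms(1)] by auto
qed

lemma world_rank_seq_rev:
  assumes "full U" "is_seq U" "is_seq V"
  shows "world_rank (seq_rev U V) w = world_rank V w * enat (length U) + world_rank U w"
proof -
  let ?n = "length U"
  have "w \<in> \<Union>(set U)" using assms(1) by (simp add: full_def)
  then obtain i where i: "i < ?n" "w \<in> U ! i" by (auto simp: in_set_conv_nth)
  have rU: "world_rank U w = enat i" using world_rank_nth[OF assms(2) i] .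
  have "?n \<noteq> 0" using i by auto
  show ?thesis
  proof (cases "w \<in> \<Union>(set V)")
    case True
    then obtain j where j: "j < length V" "w \<in> V ! j" by (auto simp: in_set_conv_nth)
    have "j * ?n + i < Suc j * ?n" using i by simp
    also have "\<dots> \<le> length V * ?n" using j by (intro mult_le_mono1) simp
    finally have k: "j * ?n + i < length V * ?n" .
    have "(j * ?n + i) mod ?n = i" using i(1) by simp
    moreover have "(j * ?n + i) div ?n = j" using i(1) by (intro div_nat_eqI) (simp_all add: mult.commute)
    ultimately have "w \<in> seq_rev U V ! (j * ?n + i)" using i j by (simp add: nth_seq_rev[OF assms(1) k])
    then have "world_rank (seq_rev U V) w = enat (j * ?n + i)"
      using k by (intro world_rank_nth is_seq_seq_rev assms) (simp_all add: length_seq_rev[OF assms(1)])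
    then show ?thesis using world_rank_nth[OF assms(3) j] rU by simp
  next
    case False
    then have "w \<notin> \<Union>(set (seq_rev U V))" using assms(1) by (auto simp: seq_rev_full)
    with False have "world_rank (seq_rev U V) w = \<infinity>" "world_rank V w = \<infinity>"
      by (simp_all add: world_rank_eq_infinity_iff)
    then show ?thesis using \<open>?n \<noteq> 0\<close> by (simp add: rU)
  qed
qed

lemma lex_mult_add_le_iff:
  fixes i i' j j' n :: nat
  assumes "i < n" "i' < n"
  shows "j * n + i \<le> j' * n + i' \<longleftrightarrow> j < j' \<or> (j = j' \<and> i \<le> i')"
proof -
  have "k * n + i < k' * n + i'" if "k < k'" "i < n" for k k' i i' :: nat
  proof -
    have "k * n + i < Suc k * n" using that(2) by simp
    also have "\<dots> \<le> k' * n" using that(1) by (intro mult_le_mono1) simp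
    finally show ?thesis by simp
  qed
  from this[of j j' i i'] this[of j' j i' i] assms show ?thesis
    by (cases j j' rule: linorder_cases) auto
qed

lemma enat_lex_le_iff:
  fixes a a' b b' :: enat
  assumes "b < enat n" "b' < enat n"
  shows "a * enat n + b \<le> a' * enat n + b' \<longleftrightarrow> a' = \<infinity> \<or> a < a' \<or> (a = a' \<and> b \<le> b')"
proof -
  obtain i i' where i: "b = enat i" "b' = enat i'" "i < n" "i' < n"
    using assms by (cases b; cases b') auto
  then have "n \<noteq> 0" by auto
  then show ?thesis using i lex_mult_add_le_iff[OF i(3,4)]
    by (cases a; cases a') (auto simp: not_le)
qed

lemma world_rank_seq_rev_le_iff:
  assumes "full U" "is_seq U" "is_seq V"
  shows "world_rank (seq_rev U V) w \<le> world_rank (seq_rev U V) w' \<longleftrightarrow>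
    world_rank V w' = \<infinity> \<or> world_rank V w < world_rank V w' \<or>
    (world_rank V w = world_rank V w' \<and> world_rank U w \<le> world_rank U w')"
  unfolding world_rank_seq_rev[OF assms]
  using assms(1) by (intro enat_lex_le_iff) (simp_all add: full_def world_rank_less_length)

lemma world_rank_seq_rev_eq_infinity_iff:
  assumes "full U" "is_seq U" "is_seq V"
  shows "world_rank (seq_rev U V) w = \<infinity> \<longleftrightarrow> world_rank V w = \<infinity>"
proof -
  obtain i where "world_rank U w = enat i"
    using assms(1) not_infinity_eq unfolding full_iff_world_rank by metis
  moreover have "length U \<noteq> 0" using assms(2) by (simp add: is_seq_def)
  ultimately show ?thesis by (cases "world_rank V w") (simp_all add: world_rank_seq_rev[OF assms])
qed

lemma Ups_seq_rev:
  assumes "U \<in> Ups" "V \<in> Ups"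
  shows "seq_rev U V \<in> Ups"
proof (cases "full U")
  case True
  have seqs: "is_seq U" "is_seq V" and "full V \<or> empty_seq V" using assms by (simp_all add: Ups_def)
  then have "full (seq_rev U V) \<or> empty_seq (seq_rev U V)"
    by (auto simp: full_iff_world_rank empty_seq_iff_world_rank world_rank_seq_rev_eq_infinity_iff[OF True])
  with is_seq_seq_rev[OF True seqs] show ?thesis by (simp add: Ups_def)
qed (use assms in \<open>simp add: seq_rev_def\<close>)

lemma full_seq_rev:
  assumes "full U" "full V"
  shows "full (seq_rev U V)"
  unfolding full_def
proof safe
  fix w
  obtain u v where "u \<in> set U" "v \<in> set V" "w \<in> u" "w \<in> v" using assms unfolding full_def by blast
  then show "w \<in> \<Union>(set (seq_rev U V))" using assms(1) by (auto simp: seq_rev_full)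
qed auto

lemma concat_map_concat: "concat (map (\<lambda>x. concat (f x)) xs) = concat (concat (map f xs))"
  by (induction xs) auto

lemma seq_rev_assoc:
  assumes "full V"
  shows "seq_rev (seq_rev U V) W = seq_rev U (seq_rev V W)"
proof (cases "full U")
  case True
  then have "full (seq_rev U V)" using assms by (rule full_seq_rev)
  with True assms show ?thesis
    by (simp add: seq_rev_def map_concat comp_def Int_assoc flip: concat_map_concat)
qed (simp add: seq_rev_def assms)

section \<open>Revision of E-relations is well defined\<close>

lemma surj_S: "surj (S :: 'v::finite form \<Rightarrow> 'v set set)"
proof -
  obtain vs :: "'v list" where vs: "set vs = UNIV" using finite_list[OF finite_UNIV] by blast
  define world_form :: "'v set \<Rightarrow> 'v form"
    where "world_form w = foldr Conj (map (\<lambda>v. if v \<in> w then Var v else Neg (Var v)) vs) Top" for w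
  have "S (foldr Conj (map (\<lambda>v. if v \<in> w then Var v else Neg (Var v)) us) Top)
          = {x. \<forall>v\<in>set us. v \<in> x \<longleftrightarrow> v \<in> w}" for us w
    by (induction us) auto
  then have S_world_form: "S (world_form w) = {w}" for w
    using vs by (auto simp: world_form_def)
  have S_Disj: "S (foldr Disj (map world_form ws) Bot) = set ws" for ws
    by (induction ws) (auto simp: S_world_form)
  have "\<exists>\<theta>. X = S \<theta>" for X :: "'v set set"
  proof -
    obtain ws where "set ws = X" using finite_list[of X] by auto
    then show ?thesis using S_Disj by metis
  qed
  then show ?thesis unfolding surj_def by blast
qed

definition except :: "'v::finite set \<Rightarrow> 'v form" where
  "except w = (SOME \<theta>. S \<theta> = - {w})"

lemma S_except [simp]: "S (except w) = - {w}"
  unfolding except_def using surj_S by (metis (mono_tags) someI surj_def)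

definition rank_equiv :: "'a set list \<Rightarrow> 'a set list \<Rightarrow> bool" where
  "rank_equiv U U' \<longleftrightarrow>
     (\<forall>w w'. world_rank U w \<le> world_rank U w' \<longleftrightarrow> world_rank U' w \<le> world_rank U' w') \<and>
     (\<forall>w. world_rank U w = \<infinity> \<longleftrightarrow> world_rank U' w = \<infinity>)"

lemma prec_eq_if_rank_equiv: "rank_equiv U U' \<Longrightarrow> prec U = prec U'"
  unfolding rank_equiv_def by (intro ext) (simp add: prec_iff_world_rank)

lemma rank_equiv_if_prec_eq:
  assumes "prec U = prec (U' :: 'v::finite set set list)"
  shows "rank_equiv U U'"
proof -
  have prec_except: "prec V (except w) (except w') \<longleftrightarrow>
      (world_rank V w' \<noteq> \<infinity> \<longrightarrow> world_rank V w \<le> world_rank V w')" for V w w'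
    by (simp add: prec_iff_world_rank)
  have prec_Top: "prec V Top (except w) \<longleftrightarrow> world_rank V w = \<infinity>" for V w
    by (simp add: prec_iff_world_rank)
  have unranked: "world_rank U w = \<infinity> \<longleftrightarrow> world_rank U' w = \<infinity>" for w
    using prec_Top[of U w] prec_Top[of U' w] assms by simp
  have "world_rank U w \<le> world_rank U w' \<longleftrightarrow> world_rank U' w \<le> world_rank U' w'" for w w'
    using prec_except[of U w w'] prec_except[of U' w w'] assms unranked[of w']
    by (cases "world_rank U w' = \<infinity>") auto
  with unranked show ?thesis unfolding rank_equiv_def by blast
qed

lemma rank_equiv_seq_rev:
  assumes "full U" "full U'" "is_seq U" "is_seq U'" "is_seq V" "is_seq V'"
    and U: "rank_equiv U U'" and V: "rank_equiv V V'"
  shows "rank_equiv (seq_rev U V) (seq_rev U' V')"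
proof -
  have V_le: "world_rank V w \<le> world_rank V w' \<longleftrightarrow> world_rank V' w \<le> world_rank V' w'"
    and V_inf: "world_rank V w = \<infinity> \<longleftrightarrow> world_rank V' w = \<infinity>"
    and U_le: "world_rank U w \<le> world_rank U w' \<longleftrightarrow> world_rank U' w \<le> world_rank U' w'" for w w'
    using U V by (simp_all add: rank_equiv_def)
  have V_less: "world_rank V w < world_rank V w' \<longleftrightarrow> world_rank V' w < world_rank V' w'"
    and V_eq: "world_rank V w = world_rank V w' \<longleftrightarrow> world_rank V' w = world_rank V' w'" for w w'
    using V_le by (simp_all only: less_le_not_le order.eq_iff[of "world_rank _ w"])
  show ?thesis
    unfolding rank_equiv_def
      world_rank_seq_rev_le_iff[OF assms(1,3,5)] world_rank_seq_rev_le_iff[OF assms(2,4,6)]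
      world_rank_seq_rev_eq_infinity_iff[OF assms(1,3,5)]
      world_rank_seq_rev_eq_infinity_iff[OF assms(2,4,6)]
    by (simp only: V_inf V_less V_eq U_le simp_thms)
qed

lemma prec_seq_rev_cong:
  assumes "U \<in> Ups" "U' \<in> Ups" "V \<in> Ups" "V' \<in> Ups"
    and "prec U = prec (U' :: 'v::finite set set list)" "prec V = prec V'"
  shows "prec (seq_rev U V) = prec (seq_rev U' V')"
proof -
  have U: "rank_equiv U U'" and V: "rank_equiv V V'"
    using assms(5,6) by (simp_all add: rank_equiv_if_prec_eq)
  then have "full U \<longleftrightarrow> full U'" unfolding full_iff_world_rank rank_equiv_def by blast
  then show ?thesis
    using assms(1-4,6) rank_equiv_seq_rev[OF _ _ _ _ _ _ U V] prec_eq_if_rank_equiv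
    by (cases "full U") (auto simp: Ups_def seq_rev_def)
qed

lemma rep_prec:
  assumes "U \<in> Ups"
  shows "rep (prec U) \<in> Ups" "prec (rep (prec U)) = prec U"
  unfolding rep_def using someI[of "\<lambda>V. V \<in> Ups \<and> prec V = prec U" U] assms by auto

lemma erev_prec:
  assumes "U \<in> Ups" "V \<in> Ups"
  shows "erev (prec U) (prec V) = prec (seq_rev U (V :: 'v::finite set set list))"
  unfolding erev_def using assms by (intro prec_seq_rev_cong rep_prec)

section \<open>Every E-relation is represented by a sequence\<close>

lemma E_relation_trans: "E_relation r \<Longrightarrow> r a b \<Longrightarrow> r b c \<Longrightarrow> r a c"
  unfolding E_relation_def by blast

lemma E_relation_if_subset: "E_relation r \<Longrightarrow> S a \<subseteq> S b \<Longrightarrow> r a b"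
  unfolding E_relation_def entails_def by blast

lemma E_relation_conj: "E_relation r \<Longrightarrow> r a (Conj a b) \<or> r b (Conj a b)"
  unfolding E_relation_def by blast

lemma E_relation_validI:
  assumes "E_relation r" "strict r Bot \<psi>" "\<And>\<theta>. r \<theta> \<phi>"
  shows "valid \<phi>"
proof -
  have "(\<exists>\<psi>. strict r Bot \<psi>) \<longrightarrow> (\<forall>\<phi>. (\<forall>\<theta>. r \<theta> \<phi>) \<longrightarrow> valid \<phi>)"
    using assms(1) unfolding E_relation_def by (elim conjE)
  with assms(2,3) show ?thesis by blast
qed

lemma E_relation_conj_cases:
  assumes "E_relation r" "S \<theta> = S a \<inter> S b"
  shows "r a \<theta> \<or> r b \<theta>"
proof -
  have "r (Conj a b) \<theta>" by (rule E_relation_if_subset) (simp_all add: assms)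
  with E_relation_conj[OF assms(1), of a b] show ?thesis
    using E_relation_trans[OF assms(1) _ \<open>r (Conj a b) \<theta>\<close>] by blast
qed

lemma E_relation_total:
  assumes "E_relation r"
  shows "r a b \<or> r b a"
proof -
  have ab: "r (Conj a b) a" "r (Conj a b) b" by (rule E_relation_if_subset[OF assms], simp)+
  with E_relation_conj[OF assms, of a b] show ?thesis
    using E_relation_trans[OF assms _ ab(1)] E_relation_trans[OF assms _ ab(2)] by blast
qed

lemma E_relation_maximum_valid:
  assumes "E_relation r" "\<not> absurd r" "\<And>\<theta>. r \<theta> \<phi>"
  shows "S \<phi> = UNIV"
proof -
  obtain a b where "\<not> r a b" using assms(2) unfolding absurd_def by blast
  moreover have "r Bot b" by (rule E_relation_if_subset[OF assms(1)]) simp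
  ultimately have "\<not> r a Bot" using E_relation_trans[OF assms(1), of a Bot b] by blast
  then have "strict r Bot a" using E_relation_if_subset[OF assms(1), of Bot a] by (simp add: strict_def)
  then have "valid \<phi>" by (rule E_relation_validI[OF assms(1) _ assms(3)])
  then show ?thesis by (simp add: valid_def)
qed

lemma E_relation_except_le:
  assumes "E_relation r" "S \<theta> \<noteq> UNIV"
  shows "\<exists>w. w \<notin> S \<theta> \<and> r (except w) \<theta>"
proof -
  have below: "\<exists>w\<in>X. r (except w) \<theta>" if "finite X" "X \<noteq> {}" "- S \<theta> = X" for X \<theta>
    using that
  proof (induction X arbitrary: \<theta> rule: finite_ne_induct)
    case (singleton w)
    then have "S \<theta> = - {w}" by (metis double_compl)
    then show ?case using E_relation_if_subset[OF assms(1), of "except w" \<theta>] by simp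
  next
    case (insert w X)
    obtain \<theta>' where \<theta>': "S \<theta>' = - X" using surjD[OF surj_S, of "- X"] by metis
    have "S \<theta> = S (except w) \<inter> S \<theta>'" using insert.prems \<theta>' by auto
    with assms(1) have "r (except w) \<theta> \<or> r \<theta>' \<theta>" by (rule E_relation_conj_cases)
    then show ?case
    proof
      assume "r \<theta>' \<theta>"
      obtain w' where "w' \<in> X" and w': "r (except w') \<theta>'" using insert.IH[of \<theta>'] \<theta>' by auto
      have "r (except w') \<theta>" by (rule E_relation_trans[OF assms(1) w' \<open>r \<theta>' \<theta>\<close>])
      with \<open>w' \<in> X\<close> show ?case by blast
    qed simp
  qed
  have "- S \<theta> \<noteq> {}" using assms(2) by blast
  then show ?thesis using below[of "- S \<theta>" \<theta>] by auto
qed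

lemma E_relation_iff_except:
  assumes "E_relation r" "\<not> absurd r"
  shows "r \<theta> \<phi> \<longleftrightarrow> (\<forall>w. w \<notin> S \<phi> \<longrightarrow> (\<exists>w'. w' \<notin> S \<theta> \<and> r (except w') (except w)))"
proof
  assume "r \<theta> \<phi>"
  show "\<forall>w. w \<notin> S \<phi> \<longrightarrow> (\<exists>w'. w' \<notin> S \<theta> \<and> r (except w') (except w))"
  proof (intro allI impI)
    fix w assume "w \<notin> S \<phi>"
    then have "r \<phi> (except w)" by (intro E_relation_if_subset[OF assms(1)]) auto
    with \<open>r \<theta> \<phi>\<close> have \<theta>w: "r \<theta> (except w)" by (rule E_relation_trans[OF assms(1)])
    have "S \<theta> \<noteq> UNIV"
    proof
      assume "S \<theta> = UNIV"
      then have "r \<psi> (except w)" for \<psi>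
        using E_relation_trans[OF assms(1) _ \<theta>w] E_relation_if_subset[OF assms(1), of \<psi> \<theta>] by simp
      then have "S (except w) = UNIV" by (rule E_relation_maximum_valid[OF assms])
      then show False by auto
    qed
    then obtain w' where "w' \<notin> S \<theta>" and w'\<theta>: "r (except w') \<theta>"
      using E_relation_except_le[OF assms(1)] by blast
    have "r (except w') (except w)" by (rule E_relation_trans[OF assms(1) w'\<theta> \<theta>w])
    with \<open>w' \<notin> S \<theta>\<close> show "\<exists>w'. w' \<notin> S \<theta> \<and> r (except w') (except w)" by blast
  qed
next
  assume below: "\<forall>w. w \<notin> S \<phi> \<longrightarrow> (\<exists>w'. w' \<notin> S \<theta> \<and> r (except w') (except w))"
  show "r \<theta> \<phi>"
  proof (cases "S \<phi> = UNIV")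
    case True
    then show ?thesis by (intro E_relation_if_subset[OF assms(1)]) simp
  next
    case False
    then obtain w where "w \<notin> S \<phi>" and w\<phi>: "r (except w) \<phi>" using E_relation_except_le[OF assms(1)] by blast
    then obtain w' where "w' \<notin> S \<theta>" and w'w: "r (except w') (except w)" using below by blast
    then have "r \<theta> (except w')" by (intro E_relation_if_subset[OF assms(1)]) auto
    then have "r \<theta> (except w)" by (rule E_relation_trans[OF assms(1) _ w'w])
    then show ?thesis by (rule E_relation_trans[OF assms(1) _ w\<phi>])
  qed
qed

lemma total_preorder_nat_rank:
  fixes R :: "'a::finite \<Rightarrow> 'a \<Rightarrow> bool"
  assumes trans: "\<And>a b c. R a b \<Longrightarrow> R b c \<Longrightarrow> R a c" and total: "\<And>a b. R a b \<or> R b a"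
  obtains h :: "'a \<Rightarrow> nat"
  where "\<And>a b. h a \<le> h b \<longleftrightarrow> R a b" "\<And>a. h a < card (UNIV :: 'a set)"
proof
  define below where "below a = {x. R x a \<and> \<not> R a x}" for a
  have mono: "below a \<subseteq> below b" if "R a b" for a b
    using that trans unfolding below_def by blast
  show "card (below a) \<le> card (below b) \<longleftrightarrow> R a b" for a b
  proof
    assume "card (below a) \<le> card (below b)"
    show "R a b"
    proof (rule ccontr)
      assume "\<not> R a b"
      with total have "R b a" by blast
      with \<open>\<not> R a b\<close> have "below b \<subset> below a" using mono[of b a] unfolding below_def by blast
      then have "card (below b) < card (below a)" by (rule psubset_card_mono[OF finite])
      with \<open>card (below a) \<le> card (below b)\<close> show False by simp
    qed
  qed (intro card_mono finite mono)
  show "card (below a) < card (UNIV :: 'a set)" for a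
    by (rule psubset_card_mono) (auto simp: below_def)
qed

definition levels :: "('a \<Rightarrow> nat) \<Rightarrow> nat \<Rightarrow> 'a set list" where
  "levels h n = map (\<lambda>i. {w. h w = i}) [0..<n]"

lemma
  assumes "\<And>w. h w < n"
  shows is_seq_levels: "is_seq (levels h n)"
    and world_rank_levels: "world_rank (levels h n) w = enat (h w)"
proof -
  show "is_seq (levels h n)" using assms[of undefined] by (auto simp: is_seq_def levels_def)
  then show "world_rank (levels h n) w = enat (h w)"
    using assms by (intro world_rank_nth) (simp_all add: levels_def)
qed

lemma E_relation_represented:
  fixes r :: "'v::finite form \<Rightarrow> 'v form \<Rightarrow> bool"
  assumes "E_relation r"
  shows "\<exists>U\<in>Ups. prec U = r"
proof (cases "absurd r")
  case True
  have "[{}] \<in> Ups" by (simp add: Ups_def is_seq_def empty_seq_def)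
  moreover have "prec [{}] = r"
    using True by (intro ext) (simp add: absurd_def prec_iff_world_rank world_rank_eq_infinity_iff)
  ultimately show ?thesis by blast
next
  case False
  obtain h where h: "\<And>a b. h a \<le> h b \<longleftrightarrow> r (except a) (except b)"
    "\<And>a. h a < card (UNIV :: 'v set set)"
  proof (rule total_preorder_nat_rank[of "\<lambda>a b. r (except a) (except b)"])
    show "r (except a) (except c)" if "r (except a) (except b)" "r (except b) (except c)" for a b c
      using that by (rule E_relation_trans[OF assms])
    show "r (except a) (except b) \<or> r (except b) (except a)" for a b
      by (rule E_relation_total[OF assms])
  qed (rule that)
  let ?U = "levels h (card (UNIV :: 'v set set))"
  have "?U \<in> Ups"
    using h(2) by (simp add: Ups_def is_seq_levels full_iff_world_rank world_rank_levels)
  moreover have "prec ?U \<theta> \<phi> \<longleftrightarrow> r \<theta> \<phi>" for \<theta> \<phi>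
    unfolding E_relation_iff_except[OF assms False, of \<theta> \<phi>]
    using h(2) by (simp add: prec_iff_world_rank world_rank_levels h(1))
  ultimately show ?thesis by blast
qed

theorem proposition7:
  fixes r1 r2 r3 :: "'v::finite form \<Rightarrow> 'v form \<Rightarrow> bool"
  assumes "E_relation r1" and "E_relation r2" and "E_relation r3"
    and "\<not> absurd r2"
  shows "erev (erev r1 r2) r3 = erev r1 (erev r2 r3)"
proof -
  obtain U1 U2 U3 where U: "U1 \<in> Ups" "U2 \<in> Ups" "U3 \<in> Ups"
    and r: "r1 = prec U1" "r2 = prec U2" "r3 = prec U3"
    using E_relation_represented[OF assms(1)] E_relation_represented[OF assms(2)]
      E_relation_represented[OF assms(3)] by blast
  have "full U2" using full_if_not_absurd U(2) assms(4) r(2) by blast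
  have "erev (erev r1 r2) r3 = prec (seq_rev (seq_rev U1 U2) U3)"
    by (simp add: r erev_prec Ups_seq_rev U)
  also have "\<dots> = prec (seq_rev U1 (seq_rev U2 U3))"
    by (simp add: seq_rev_assoc \<open>full U2\<close>)
  also have "\<dots> = erev r1 (erev r2 r3)"
    by (simp add: r erev_prec Ups_seq_rev U)
  finally show ?thesis .
qed

end
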